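(* Let $R$ be a local Artinian ring which is not a division ring, and let $C=C(R)$ be its center. (1) If $R$ is centrally essential, then $R/J(R)$ is commutative and $C\cap M\neq 0$ for every minimal right ideal $M$ of $R$. (2) If $R/J(R)$ is commutative, $\mathrm{Soc}(R_C)=\mathrm{Soc}(R_R)$, and $C\cap M\neq 0$ for every minimal right ideal $M$ of $R$, then $R$ is centrally essential.
   Context: All rings are associative with non-zero identity. A ring $R$ is centrally essential if for every non-zero $a\in R$ there exist non-zero elements $x,y\in C(R)$ with $ax=y$. A ring is local if $R/J(R)$ is a division ring, where $J(R)$ is the Jacobson radical. $\mathrm{Soc}(R_R)$ is the sum of all minimal right ideals of $R$, and $\mathrm{Soc}(R_C)$ is the sum of all simple $C$-submodules of $R$ regarded as a $C$-module. *)

theory Defs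
  imports Main
begin

definition right_ideal :: "'a::ring_1 set \<Rightarrow> bool" where
  "right_ideal I \<longleftrightarrow> 0 \<in> I \<and> (\<forall>x\<in>I. \<forall>y\<in>I. x + y \<in> I) \<and> (\<forall>x\<in>I. - x \<in> I)
     \<and> (\<forall>x\<in>I. \<forall>r. x * r \<in> I)"

definition maximal_right_ideal :: "'a::ring_1 set \<Rightarrow> bool" where
  "maximal_right_ideal M \<longleftrightarrow> right_ideal M \<and> M \<noteq> UNIV \<and>
     (\<forall>I. right_ideal I \<and> M \<subseteq> I \<longrightarrow> I = M \<or> I = UNIV)"

definition jacobson :: "'a::ring_1 set" where
  "jacobson = \<Inter> {M. maximal_right_ideal M}"

definition minimal_right_ideal :: "'a::ring_1 set \<Rightarrow> bool" where
  "minimal_right_ideal M \<longleftrightarrow> right_ideal M \<and> M \<noteq> {0} \<and>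
     (\<forall>I. right_ideal I \<and> I \<subseteq> M \<longrightarrow> I = {0} \<or> I = M)"

definition center :: "'a::ring_1 set" where
  "center = {c. \<forall>x. c * x = x * c}"

definition division_ring :: "'a::ring_1 itself \<Rightarrow> bool" where
  "division_ring _ \<longleftrightarrow> (\<forall>x::'a. x \<noteq> 0 \<longrightarrow> (\<exists>y. x * y = 1 \<and> y * x = 1))"

text \<open>R/J(R) is a division ring, written out in R: the quotient is nonzero
  (J \<noteq> R) and every class outside J has a two-sided inverse modulo J.\<close>
definition local_ring :: "'a::ring_1 itself \<Rightarrow> bool" where
  "local_ring _ \<longleftrightarrow> (jacobson :: 'a set) \<noteq> UNIV \<and>
     (\<forall>x::'a. x \<notin> jacobson \<longrightarrow> (\<exists>y. x * y - 1 \<in> jacobson \<and> y * x - 1 \<in> jacobson))"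

definition quotient_jacobson_commutative :: "'a::ring_1 itself \<Rightarrow> bool" where
  "quotient_jacobson_commutative _ \<longleftrightarrow> (\<forall>x y::'a. x * y - y * x \<in> jacobson)"

definition right_artinian :: "'a::ring_1 itself \<Rightarrow> bool" where
  "right_artinian _ \<longleftrightarrow> (\<forall>f :: nat \<Rightarrow> 'a set.
     (\<forall>n. right_ideal (f n) \<and> f (Suc n) \<subseteq> f n) \<longrightarrow> (\<exists>N. \<forall>n\<ge>N. f n = f N))"

definition centrally_essential :: "'a::ring_1 itself \<Rightarrow> bool" where
  "centrally_essential _ \<longleftrightarrow> (\<forall>a::'a. a \<noteq> 0 \<longrightarrow>
     (\<exists>x\<in>center. \<exists>y\<in>center. x \<noteq> 0 \<and> y \<noteq> 0 \<and> a * x = y))"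

definition add_subgroup :: "'a::ring_1 set \<Rightarrow> bool" where
  "add_subgroup S \<longleftrightarrow> 0 \<in> S \<and> (\<forall>x\<in>S. \<forall>y\<in>S. x + y \<in> S) \<and> (\<forall>x\<in>S. - x \<in> S)"

definition sum_of :: "'a::ring_1 set set \<Rightarrow> 'a set" where
  "sum_of F = \<Inter> {S. add_subgroup S \<and> \<Union> F \<subseteq> S}"

definition soc_right :: "'a::ring_1 set" where
  "soc_right = sum_of {M. minimal_right_ideal M}"

text \<open>R regarded as a (right) module over its center C.\<close>
definition C_submodule :: "'a::ring_1 set \<Rightarrow> bool" where
  "C_submodule N \<longleftrightarrow> add_subgroup N \<and> (\<forall>x\<in>N. \<forall>c\<in>center. x * c \<in> N)"

definition simple_C_submodule :: "'a::ring_1 set \<Rightarrow> bool" where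
  "simple_C_submodule N \<longleftrightarrow> C_submodule N \<and> N \<noteq> {0} \<and>
     (\<forall>K. C_submodule K \<and> K \<subseteq> N \<longrightarrow> K = {0} \<or> K = N)"

definition soc_center :: "'a::ring_1 set" where
  "soc_center = sum_of {N. simple_C_submodule N}"

end

theory Submission
  imports Defs
begin

(* In a local ring every element outside J = J(R) is a unit. Hence J annihilates every minimal
   right ideal, and conversely sR is a minimal right ideal whenever s is nonzero and sJ = 0.

   (1) A nonzero central element c of a minimal right ideal satisfies cr = 0 iff r lies in J.
   For a outside J, central essentiality gives central x, y with cax = y, where x is a unit,
   and then c(ab - ba)x = yb - by = 0; so ab - ba lies in J.

   (2) By the descending chain condition some right ideal axR with x central and ax nonzero is
   minimal among such ideals, which forces ax to annihilate the central elements of J. Then axC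
   is a simple C-module, so ax lies in Soc(R_C) = Soc(R_R) and axJ = 0. Hence axR is a minimal
   right ideal and contains a nonzero central z = axr with r a unit; ax = zr' (r' the inverse
   of r) is central because R/J is commutative and zJ = 0. *)

lemma right_ideal_UNIV_if_one:
  assumes "right_ideal I" and "(1::'a::ring_1) \<in> I"
  shows "I = UNIV"
proof -
  have "1 * x \<in> I" for x using assms unfolding right_ideal_def by blast
  then show ?thesis by auto
qed

lemma right_ideal_diff: "right_ideal I \<Longrightarrow> x \<in> I \<Longrightarrow> y \<in> I \<Longrightarrow> x - y \<in> I"
  unfolding right_ideal_def by (metis diff_conv_add_uminus)

lemma right_ideal_image_mult:
  assumes "right_ideal I"
  shows "right_ideal ((*) (z::'a::ring_1) ` I)"
  unfolding right_ideal_def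
proof (intro conjI ballI allI)
  show "0 \<in> (*) z ` I" using assms unfolding right_ideal_def by force
next
  fix x y assume "x \<in> (*) z ` I" "y \<in> (*) z ` I"
  then obtain p q where "p \<in> I" "q \<in> I" "x = z * p" "y = z * q" by blast
  with assms show "x + y \<in> (*) z ` I"
    unfolding right_ideal_def by (metis distrib_left image_eqI)
next
  fix x r assume "x \<in> (*) z ` I"
  then obtain p where "p \<in> I" "x = z * p" by blast
  with assms show "- x \<in> (*) z ` I" and "x * r \<in> (*) z ` I"
    unfolding right_ideal_def by (metis mult_minus_right mult.assoc image_eqI)+
qed

lemma right_ideal_principal: "right_ideal (range ((*) (z::'a::ring_1)))"
  by (rule right_ideal_image_mult) (simp add: right_ideal_def)

lemma right_ideal_jacobson: "right_ideal (jacobson::'a::ring_1 set)"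
  by (auto simp: jacobson_def right_ideal_def maximal_right_ideal_def)

lemma right_ideal_Union_chain:
  assumes "CC \<noteq> {}" and "subset.chain {K. right_ideal K} CC"
  shows "right_ideal (\<Union>CC)"
proof -
  have ideals: "\<And>X. X \<in> CC \<Longrightarrow> right_ideal X"
    and total: "\<And>X Y. X \<in> CC \<Longrightarrow> Y \<in> CC \<Longrightarrow> X \<subseteq> Y \<or> Y \<subseteq> X"
    using assms(2) unfolding subset.chain_def by auto
  have "x + y \<in> \<Union>CC" if xy: "x \<in> \<Union>CC" "y \<in> \<Union>CC" for x y
  proof -
    obtain X Y where X: "X \<in> CC" "x \<in> X" and Y: "Y \<in> CC" "y \<in> Y" using xy by blast
    with total[OF X(1) Y(1)] ideals[OF X(1)] ideals[OF Y(1)] show ?thesis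
      unfolding right_ideal_def by blast
  qed
  with assms(1) ideals show ?thesis unfolding right_ideal_def by blast
qed

lemma exists_maximal_right_ideal:
  assumes "right_ideal (I::'a::ring_1 set)" and "1 \<notin> I"
  shows "\<exists>M. maximal_right_ideal M \<and> I \<subseteq> M"
proof -
  let ?A = "{K::'a set. right_ideal K \<and> I \<subseteq> K \<and> 1 \<notin> K}"
  have "\<exists>M\<in>?A. \<forall>X\<in>?A. M \<subseteq> X \<longrightarrow> X = M"
  proof (rule subset_Zorn_nonempty)
    fix CC assume "CC \<noteq> {}" and chain: "subset.chain ?A CC"
    then have "right_ideal (\<Union>CC)"
      by (intro right_ideal_Union_chain) (auto simp: subset.chain_def)
    with \<open>CC \<noteq> {}\<close> chain show "\<Union>CC \<in> ?A" by (auto simp: subset.chain_def)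
  qed (use assms in blast)
  then obtain M where M: "M \<in> ?A" and max: "\<forall>X\<in>?A. M \<subseteq> X \<longrightarrow> X = M" by blast
  have "maximal_right_ideal M"
    unfolding maximal_right_ideal_def
  proof (intro conjI allI impI)
    show "right_ideal M" and "M \<noteq> UNIV" using M by auto
    fix K assume "right_ideal K \<and> M \<subseteq> K"
    with M max right_ideal_UNIV_if_one[of K] show "K = M \<or> K = UNIV" by blast
  qed
  with M show ?thesis by blast
qed

lemma right_artinian_minimal_element:
  assumes DCC: "right_artinian (T::'a::ring_1 itself)" and "right_ideal (I::'a set)" and "P I"
  shows "\<exists>M. right_ideal M \<and> P M \<and> (\<forall>N. right_ideal N \<and> P N \<and> N \<subseteq> M \<longrightarrow> N = M)"
proof (rule ccontr)
  assume "\<not> ?thesis"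
  then have "\<forall>K. \<exists>N. right_ideal K \<and> P K \<longrightarrow> right_ideal N \<and> P N \<and> N \<subset> K"
    by (auto simp: psubset_eq)
  then have "\<exists>g. \<forall>K. right_ideal K \<and> P K \<longrightarrow> right_ideal (g K) \<and> P (g K) \<and> g K \<subset> K"
    by (rule choice)
  then obtain g
    where g: "\<forall>K. right_ideal K \<and> P K \<longrightarrow> right_ideal (g K) \<and> P (g K) \<and> g K \<subset> K" ..
  define f where "f n = (g ^^ n) I" for n
  have f_0: "f 0 = I" and f_Suc_eq: "f (Suc n) = g (f n)" for n by (simp_all add: f_def)
  have f: "right_ideal (f n) \<and> P (f n)" for n
  proof (induction n)
    case 0
    show ?case using assms by (simp add: f_0)
  next
    case (Suc n)
    show ?case using g[rule_format, OF Suc] by (simp add: f_Suc_eq)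
  qed
  have f_Suc: "f (Suc n) \<subset> f n" for n
    using g[rule_format, OF f[of n]] by (simp add: f_Suc_eq)
  then have "\<forall>n. right_ideal (f n) \<and> f (Suc n) \<subseteq> f n" using f by auto
  then obtain N where "\<forall>n\<ge>N. f n = f N"
    using DCC[unfolded right_artinian_def, THEN spec[of _ f]] by blast
  then have "f (Suc N) = f N" by (blast intro: le_SucI)
  with f_Suc[of N] show False by simp
qed

lemma exists_minimal_right_ideal:
  assumes "right_artinian (T::'a::ring_1 itself)"
  shows "\<exists>M::'a set. minimal_right_ideal M"
proof -
  have "right_ideal (UNIV::'a set)" by (simp add: right_ideal_def)
  moreover have "(UNIV::'a set) \<noteq> {0}" by (metis UNIV_I singletonD zero_neq_one)
  ultimately obtain M :: "'a set" where "right_ideal M" "M \<noteq> {0}"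
    and "\<forall>N. right_ideal N \<and> N \<noteq> {0} \<and> N \<subseteq> M \<longrightarrow> N = M"
    using right_artinian_minimal_element[where P = "\<lambda>K. K \<noteq> {0}", OF assms] by blast
  then have "minimal_right_ideal M" unfolding minimal_right_ideal_def by blast
  then show ?thesis ..
qed

lemma mem_sum_of: "x \<in> N \<Longrightarrow> N \<in> F \<Longrightarrow> x \<in> sum_of F"
  unfolding sum_of_def by blast

lemma zero_mem_sum_of: "0 \<in> sum_of F"
  unfolding sum_of_def add_subgroup_def by blast

lemma sum_of_subset: "add_subgroup S \<Longrightarrow> \<Union>F \<subseteq> S \<Longrightarrow> sum_of F \<subseteq> S"
  unfolding sum_of_def by blast

lemma center_commute: "c \<in> center \<Longrightarrow> c * x = x * c"
  unfolding center_def by blast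

lemma center_left_commute: "c \<in> center \<Longrightarrow> c * (x * y) = x * (c * y)"
  by (metis center_commute mult.assoc)

lemma zero_mem_center: "0 \<in> center" and one_mem_center: "1 \<in> center"
  unfolding center_def by simp_all

lemma add_mem_center: "c \<in> center \<Longrightarrow> d \<in> center \<Longrightarrow> c + d \<in> center"
  unfolding center_def by (simp add: distrib_left distrib_right)

lemma uminus_mem_center: "c \<in> center \<Longrightarrow> - c \<in> center"
  unfolding center_def by simp

lemma mult_mem_center:
  assumes "c \<in> center" and "d \<in> center"
  shows "c * d \<in> center"
  unfolding center_def
proof (intro CollectI allI)
  fix x
  have "c * d * x = c * (x * d)" using center_commute[OF assms(2)] by (simp add: mult.assoc)
  also have "\<dots> = x * (c * d)" using center_commute[OF assms(1)] by (metis mult.assoc)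
  finally show "c * d * x = x * (c * d)" .
qed

lemma inverse_mem_center:
  assumes "c \<in> center" and "c * v = 1" and "v * c = 1"
  shows "v \<in> center"
  unfolding center_def
proof (intro CollectI allI)
  fix x
  have "v * x = v * (x * c) * v" using assms(2) by (simp add: mult.assoc)
  also have "\<dots> = (v * c) * x * v" using center_commute[OF assms(1)] by (simp add: mult.assoc)
  also have "\<dots> = x * v" using assms(3) by simp
  finally show "v * x = x * v" .
qed

lemma minimal_right_ideal_meets_center:
  assumes CE: "centrally_essential (T::'a::ring_1 itself)" and M: "minimal_right_ideal (M::'a set)"
  shows "\<exists>c\<in>center \<inter> M. c \<noteq> 0"
proof -
  have "0 \<in> M" using M unfolding minimal_right_ideal_def right_ideal_def by blast
  with M obtain d where "d \<in> M" "d \<noteq> 0" unfolding minimal_right_ideal_def by blast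
  with CE obtain x y where "y \<in> center" "y \<noteq> 0" "d * x = y"
    unfolding centrally_essential_def by blast
  moreover from \<open>d \<in> M\<close> M have "d * x \<in> M"
    unfolding minimal_right_ideal_def right_ideal_def by blast
  ultimately show ?thesis by blast
qed

lemma mult_mem_center_if_annihilates_jacobson:
  assumes "quotient_jacobson_commutative (T::'a::ring_1 itself)"
    and "z \<in> center" and "\<forall>j\<in>jacobson. (z::'a) * j = 0"
  shows "z * w \<in> center"
  unfolding center_def
proof (intro CollectI allI)
  fix y
  have "w * y - y * w \<in> jacobson"
    using assms(1) unfolding quotient_jacobson_commutative_def by blast
  then have "z * (w * y - y * w) = 0" using assms(3) by blast
  then have "z * w * y = z * (y * w)" by (simp add: right_diff_distrib mult.assoc)
  also have "\<dots> = y * (z * w)" using center_left_commute[OF assms(2)] .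
  finally show "z * w * y = y * (z * w)" .
qed

context
  fixes T :: "'a::ring_1 itself"
  assumes local: "local_ring T"
begin

lemma maximal_right_ideal_eq_jacobson:
  assumes M: "maximal_right_ideal (M::'a set)"
  shows "M = jacobson"
proof
  show "jacobson \<subseteq> M" using M unfolding jacobson_def by blast
  have ideal: "right_ideal M" and proper: "1 \<notin> M"
    using M right_ideal_UNIV_if_one unfolding maximal_right_ideal_def by blast+
  show "M \<subseteq> jacobson"
  proof (rule subsetI, rule ccontr)
    fix x assume "x \<in> M" "x \<notin> jacobson"
    then obtain y where "x * y - 1 \<in> M" and "x * y \<in> M"
      using local M ideal unfolding local_ring_def jacobson_def right_ideal_def by blast
    then have "x * y - (x * y - 1) \<in> M" using ideal right_ideal_diff by blast
    with proper show False by simp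
  qed
qed

lemma right_ideal_subset_jacobson: "right_ideal (I::'a set) \<Longrightarrow> 1 \<notin> I \<Longrightarrow> I \<subseteq> jacobson"
  using exists_maximal_right_ideal maximal_right_ideal_eq_jacobson by blast

lemma one_notin_jacobson: "(1::'a) \<notin> jacobson"
  using local right_ideal_UNIV_if_one right_ideal_jacobson unfolding local_ring_def by blast

lemma one_minus_notin_jacobson:
  assumes "(j::'a) \<in> jacobson"
  shows "1 - j \<notin> jacobson"
proof
  assume "1 - j \<in> jacobson"
  with assms have "(1 - j) + j \<in> jacobson"
    using right_ideal_jacobson unfolding right_ideal_def by blast
  with one_notin_jacobson show False by simp
qed

lemma right_inverse_if_notin_jacobson:
  assumes "(x::'a) \<notin> jacobson"
  shows "\<exists>v. x * v = 1"
proof (rule ccontr)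
  assume "\<nexists>v. x * v = 1"
  then have "range ((*) x) \<subseteq> jacobson"
    by (intro right_ideal_subset_jacobson right_ideal_principal) auto
  with assms show False by (metis mult_1_right rangeI subsetD)
qed

lemma unit_if_notin_jacobson:
  assumes x: "(x::'a) \<notin> jacobson"
  shows "\<exists>v. x * v = 1 \<and> v * x = 1"
proof -
  obtain y where y: "y * x - 1 \<in> jacobson" using local x unfolding local_ring_def by blast
  obtain v where v: "x * v = 1" using right_inverse_if_notin_jacobson x by blast
  have "(y * x - 1) * v \<in> jacobson"
    using y right_ideal_jacobson unfolding right_ideal_def by blast
  then have y_v: "y - v \<in> jacobson" using v by (simp add: left_diff_distrib mult.assoc)
  have "y \<notin> jacobson"
  proof
    assume "y \<in> jacobson"
    then have "y * x \<in> jacobson" using right_ideal_jacobson unfolding right_ideal_def by blast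
    with y have "y * x - (y * x - 1) \<in> jacobson"
      using right_ideal_diff[OF right_ideal_jacobson] by blast
    with one_notin_jacobson show False by simp
  qed
  with y_v have "v \<notin> jacobson"
    using right_ideal_jacobson unfolding right_ideal_def by (metis diff_add_cancel)
  then obtain w where w: "v * w = 1" using right_inverse_if_notin_jacobson by blast
  have "x = w" using v w by (metis mult.assoc mult_1_left mult_1_right)
  with v w show ?thesis by blast
qed

lemma eq_0_if_mult_eq_0_notin_jacobson:
  assumes "c * r = 0" and "(r::'a) \<notin> jacobson"
  shows "c = 0"
proof -
  obtain v where "r * v = 1" using right_inverse_if_notin_jacobson assms(2) by blast
  then have "c = c * r * v" by (simp add: mult.assoc)
  with assms(1) show ?thesis by simp
qed

lemma eq_0_if_eq_mult_jacobson:
  assumes "m = m * k" and "(k::'a) \<in> jacobson"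
  shows "m = 0"
proof -
  have "m * (1 - k) = 0" using assms(1) by (simp add: right_diff_distrib)
  then show ?thesis
    using one_minus_notin_jacobson[OF assms(2)] by (rule eq_0_if_mult_eq_0_notin_jacobson)
qed

lemma minimal_right_ideal_mult_jacobson:
  assumes M: "minimal_right_ideal (M::'a set)" and "m \<in> M" and "j \<in> jacobson"
  shows "m * j = 0"
proof (rule ccontr)
  assume "m * j \<noteq> 0"
  have "right_ideal ((*) m ` jacobson)" by (rule right_ideal_image_mult[OF right_ideal_jacobson])
  moreover have "(*) m ` jacobson \<subseteq> M"
    using M \<open>m \<in> M\<close> unfolding minimal_right_ideal_def right_ideal_def by blast
  moreover have "(*) m ` jacobson \<noteq> {0}" using \<open>m * j \<noteq> 0\<close> \<open>j \<in> jacobson\<close> by blast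
  ultimately have "(*) m ` jacobson = M" using M unfolding minimal_right_ideal_def by blast
  then obtain k where "k \<in> jacobson" "m = m * k" using \<open>m \<in> M\<close> by force
  then have "m = 0" using eq_0_if_eq_mult_jacobson by blast
  with \<open>m * j \<noteq> 0\<close> show False by simp
qed

lemma minimal_right_ideal_principal:
  assumes "(s::'a) \<noteq> 0" and s_J: "\<forall>j\<in>jacobson. s * j = 0"
  shows "minimal_right_ideal (range ((*) s))"
  unfolding minimal_right_ideal_def
proof (intro conjI allI impI)
  show "right_ideal (range ((*) s))" by (rule right_ideal_principal)
  show "range ((*) s) \<noteq> {0}" using assms(1) by (metis mult_1_right rangeI singletonD)
  fix I assume I: "right_ideal I \<and> I \<subseteq> range ((*) s)"
  show "I = {0} \<or> I = range ((*) s)"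
  proof (cases "I = {0}")
    case False
    moreover have "0 \<in> I" using I unfolding right_ideal_def by blast
    ultimately obtain r where "s * r \<in> I" "s * r \<noteq> 0" using I by blast
    then have "r \<notin> jacobson" using s_J by blast
    then obtain r' where "r * r' = 1" using unit_if_notin_jacobson by blast
    then have "s * t = s * r * (r' * t)" for t by (metis mult.assoc mult_1_left)
    with I \<open>s * r \<in> I\<close> have "range ((*) s) \<subseteq> I"
      unfolding right_ideal_def by (metis image_subset_iff)
    with I show ?thesis by blast
  qed simp
qed

lemma soc_right_mult_jacobson:
  assumes "x \<in> (soc_right::'a set)" and "j \<in> jacobson"
  shows "x * j = 0"
proof -
  let ?Ann = "{s::'a. \<forall>j\<in>jacobson. s * j = 0}"
  have "add_subgroup ?Ann" unfolding add_subgroup_def by (simp add: distrib_right)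
  moreover have "\<Union>{M. minimal_right_ideal M} \<subseteq> ?Ann"
    using minimal_right_ideal_mult_jacobson by blast
  ultimately have "soc_right \<subseteq> ?Ann" unfolding soc_right_def by (rule sum_of_subset)
  with assms show ?thesis by blast
qed

lemma quotient_jacobson_commutative_if_centrally_essential:
  assumes "right_artinian T" and CE: "centrally_essential T"
  shows "quotient_jacobson_commutative T"
  unfolding quotient_jacobson_commutative_def
proof (intro allI)
  fix a b :: 'a
  obtain M :: "'a set" where M: "minimal_right_ideal M"
    using exists_minimal_right_ideal[OF assms(1)] by blast
  then obtain c where c: "c \<in> center" "c \<in> M" "c \<noteq> 0"
    using minimal_right_ideal_meets_center[OF CE] by blast
  have ann_c: "c * r = 0 \<longleftrightarrow> r \<in> jacobson" for r
    using minimal_right_ideal_mult_jacobson[OF M c(2)]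
      eq_0_if_mult_eq_0_notin_jacobson c(3) by blast
  have "c * (a * b - b * a) = 0"
  proof (cases "a \<in> jacobson")
    case True
    then have "c * a = 0" using ann_c by blast
    moreover have "c * (b * a) = b * (c * a)" by (rule center_left_commute[OF c(1)])
    ultimately show ?thesis by (simp add: right_diff_distrib flip: mult.assoc)
  next
    case False
    then have "c * a \<noteq> 0" using ann_c by blast
    with CE obtain x y where x: "x \<in> center" and y: "y \<in> center" "y \<noteq> 0"
      and cax: "c * a * x = y"
      unfolding centrally_essential_def by blast
    have "x \<notin> jacobson"
    proof
      assume "x \<in> jacobson"
      then have "c * x = 0" using ann_c by blast
      moreover have "c * a * x = c * x * a" by (simp add: mult.assoc center_commute[OF x])
      ultimately have "c * a * x = 0" by simp
      with cax y show False by simp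
    qed
    moreover have "c * (a * b - b * a) * x = 0"
    proof -
      have "c * (a * b) * x = c * a * x * b" by (simp add: mult.assoc center_commute[OF x])
      moreover have "c * (b * a) * x = b * (c * a * x)"
        by (simp add: mult.assoc center_left_commute[OF c(1)])
      ultimately have "c * (a * b - b * a) * x = y * b - b * y"
        using cax by (simp add: right_diff_distrib left_diff_distrib)
      then show ?thesis using center_commute[OF y(1)] by simp
    qed
    ultimately show ?thesis using eq_0_if_mult_eq_0_notin_jacobson by blast
  qed
  then show "a * b - b * a \<in> jacobson" using ann_c by blast
qed

lemma exists_mult_annihilating_jacobson:
  assumes DCC: "right_artinian T" and "1 \<in> S"
    and S_mult: "\<And>x y. x \<in> S \<Longrightarrow> y \<in> S \<Longrightarrow> x * y \<in> S" and "(a::'a) \<noteq> 0"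
  shows "\<exists>x\<in>S. a * x \<noteq> 0 \<and> (\<forall>c\<in>S \<inter> jacobson. a * x * c = 0)"
proof -
  let ?P = "\<lambda>K. \<exists>x\<in>S. a * x \<noteq> 0 \<and> K = range ((*) (a * x))"
  have "?P (range ((*) a))" using assms(2,4) by (intro bexI[of _ 1]) auto
  from right_artinian_minimal_element[where P = ?P, OF DCC right_ideal_principal this]
  obtain M where "?P M" and min: "\<forall>N. right_ideal N \<and> ?P N \<and> N \<subseteq> M \<longrightarrow> N = M"
    by (elim exE conjE)
  then obtain x where x: "x \<in> S" "a * x \<noteq> 0" and M: "M = range ((*) (a * x))" by blast
  have "a * x * c = 0" if c: "c \<in> S" "c \<in> jacobson" for c
  proof (rule ccontr)
    assume "a * x * c \<noteq> 0"
    with x c S_mult have "?P (range ((*) (a * x * c)))"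
      by (intro bexI[of _ "x * c"]) (simp_all add: mult.assoc)
    moreover have "range ((*) (a * x * c)) \<subseteq> M"
    proof (rule image_subsetI)
      fix r
      show "a * x * c * r \<in> M"
        unfolding M using rangeI[of "(*) (a * x)" "c * r"] by (simp add: mult.assoc)
    qed
    ultimately have "range ((*) (a * x * c)) = M" using min right_ideal_principal by blast
    then have "a * x \<in> range ((*) (a * x * c))"
      unfolding M using rangeI[of "(*) (a * x)" 1] by simp
    then obtain r where "a * x = a * x * c * r" by blast
    moreover have "c * r \<in> jacobson"
      using c(2) right_ideal_jacobson unfolding right_ideal_def by blast
    ultimately have "a * x = 0"
      using eq_0_if_eq_mult_jacobson by (metis mult.assoc)
    with x(2) show False ..
  qed
  with x show ?thesis by blast
qed

lemma simple_C_submodule_center_multiples: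
  assumes "(r::'a) \<noteq> 0" and r_CJ: "\<forall>c\<in>center \<inter> jacobson. r * c = 0"
  shows "simple_C_submodule ((*) r ` center)"
  unfolding simple_C_submodule_def
proof (intro conjI allI impI)
  show "C_submodule ((*) r ` center)"
    unfolding C_submodule_def add_subgroup_def
  proof (intro conjI ballI)
    show "0 \<in> (*) r ` center" using zero_mem_center by force
  next
    fix x y assume "x \<in> (*) r ` center" "y \<in> (*) r ` center"
    then obtain p q where "p \<in> center" "q \<in> center" "x = r * p" "y = r * q" by blast
    then show "x + y \<in> (*) r ` center" by (metis add_mem_center distrib_left image_eqI)
  next
    fix x assume "x \<in> (*) r ` center"
    then obtain p where "p \<in> center" "x = r * p" by blast
    then show "- x \<in> (*) r ` center" by (metis uminus_mem_center mult_minus_right image_eqI)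
  next
    fix x c :: 'a assume "x \<in> (*) r ` center" "c \<in> center"
    then obtain p where "p \<in> center" "x = r * p" by blast
    with \<open>c \<in> center\<close> show "x * c \<in> (*) r ` center"
      by (metis mult_mem_center mult.assoc image_eqI)
  qed
  show "(*) r ` center \<noteq> {0}" using assms(1) one_mem_center by force
  fix K assume K: "C_submodule K \<and> K \<subseteq> (*) r ` center"
  show "K = {0} \<or> K = (*) r ` center"
  proof (cases "K = {0}")
    case False
    moreover have "0 \<in> K" using K unfolding C_submodule_def add_subgroup_def by blast
    ultimately obtain c where c: "c \<in> center" "r * c \<in> K" "r * c \<noteq> 0" using K by blast
    then have "c \<notin> jacobson" using r_CJ by blast
    then obtain c' where "c * c' = 1" "c' * c = 1" using unit_if_notin_jacobson by blast
    with c(1) have c': "c' \<in> center" by (rule inverse_mem_center)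
    have "r * e \<in> K" if "e \<in> center" for e
    proof -
      have "r * e = r * c * (c' * e)" using \<open>c * c' = 1\<close> by (metis mult.assoc mult_1_left)
      with K c(2) c' that show ?thesis unfolding C_submodule_def by (simp add: mult_mem_center)
    qed
    with K show ?thesis by blast
  qed simp
qed

lemma mem_soc_center_if_annihilates_center_jacobson:
  assumes "\<forall>c\<in>center \<inter> jacobson. (r::'a) * c = 0"
  shows "r \<in> soc_center"
proof (cases "r = 0")
  case True
  then show ?thesis unfolding soc_center_def by (simp add: zero_mem_sum_of)
next
  case False
  have "r \<in> (*) r ` center" using one_mem_center by force
  with simple_C_submodule_center_multiples[OF False assms] show ?thesis
    unfolding soc_center_def by (blast intro: mem_sum_of)
qed

lemma centrally_essential_if_socles_eq:
  assumes DCC: "right_artinian T" and comm: "quotient_jacobson_commutative T"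
    and socles: "(soc_center::'a set) = soc_right"
    and meets: "\<forall>M::'a set. minimal_right_ideal M \<longrightarrow> center \<inter> M \<noteq> {0}"
  shows "centrally_essential T"
  unfolding centrally_essential_def
proof (intro allI impI)
  fix a :: 'a assume "a \<noteq> 0"
  obtain x where x: "x \<in> center" "a * x \<noteq> 0" and "\<forall>c\<in>center \<inter> jacobson. a * x * c = 0"
    using exists_mult_annihilating_jacobson[OF DCC one_mem_center mult_mem_center \<open>a \<noteq> 0\<close>]
    by blast
  then have "a * x \<in> soc_right"
    using mem_soc_center_if_annihilates_center_jacobson socles by blast
  then have ax_J: "\<forall>j\<in>jacobson. a * x * j = 0" using soc_right_mult_jacobson by blast
  then have M: "minimal_right_ideal (range ((*) (a * x)))"
    using minimal_right_ideal_principal[OF x(2)] by blast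
  moreover have "0 \<in> center \<inter> range ((*) (a * x))"
    using zero_mem_center by (metis IntI mult_zero_right rangeI)
  ultimately obtain r where z: "a * x * r \<in> center" "a * x * r \<noteq> 0"
    using meets by blast
  then have "r \<notin> jacobson" using ax_J by blast
  then obtain r' where "r * r' = 1" using unit_if_notin_jacobson by blast
  then have "a * x = a * x * r * r'" by (simp add: mult.assoc)
  moreover have "a * x * r * r' \<in> center"
  proof (rule mult_mem_center_if_annihilates_jacobson[OF comm z(1)])
    show "\<forall>j\<in>jacobson. a * x * r * j = 0"
      using minimal_right_ideal_mult_jacobson[OF M] by (metis rangeI)
  qed
  moreover have "x \<noteq> 0" using x(2) by auto
  ultimately show "\<exists>x\<in>center. \<exists>y\<in>center. x \<noteq> 0 \<and> y \<noteq> 0 \<and> a * x = y"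
    using x by metis
qed

end

theorem proposition3p4:
  fixes T :: "'a::ring_1 itself"
  assumes "local_ring T" and "right_artinian T" and "\<not> division_ring T"
  shows "(centrally_essential T \<longrightarrow>
            quotient_jacobson_commutative T \<and>
            (\<forall>M::'a set. minimal_right_ideal M \<longrightarrow> center \<inter> M \<noteq> {0}))
       \<and> (quotient_jacobson_commutative T \<and> (soc_center :: 'a set) = soc_right \<and>
            (\<forall>M::'a set. minimal_right_ideal M \<longrightarrow> center \<inter> M \<noteq> {0})
          \<longrightarrow> centrally_essential T)"
  using quotient_jacobson_commutative_if_centrally_essential[OF assms(1,2)]
    minimal_right_ideal_meets_center[of T]
    centrally_essential_if_socles_eq[OF assms(1,2)]
  by blast

end
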